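(* Let $p\in\mathbb{C}[z_1,\dots,z_d]$ have total degree $n$ and no zeros in $\mathbb{D}^d$, and suppose $p$ vanishes to order $M$ at $u=(1,\dots,1)$, so that $p(u-\zeta)=\sum_{j=M}^nP_j(\zeta)$ with each $P_j$ a homogeneous polynomial of degree $j$ and $P_M\neq0$. Then $P_M$ has no zeros in $\{\zeta\in\mathbb{C}:\mathrm{Re}\,\zeta>0\}^d$.
   Context: $\mathbb{D}$ denotes the open unit disk in $\mathbb{C}$. *)

theory Defs
  imports "HOL-Analysis.Analysis"
begin

text \<open>Polynomials in d variables over C, represented by coefficient functions on
multi-indices alpha :: 'd => nat (the dimension d is the cardinality of the finite type 'd).\<close>

definition is_mpoly :: "(('d::finite \<Rightarrow> nat) \<Rightarrow> complex) \<Rightarrow> bool" where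
  "is_mpoly c \<longleftrightarrow> finite {\<alpha>. c \<alpha> \<noteq> 0}"

definition monom_eval :: "('d::finite \<Rightarrow> nat) \<Rightarrow> complex^'d \<Rightarrow> complex" where
  "monom_eval \<alpha> z = (\<Prod>i\<in>UNIV. (z$i) ^ (\<alpha> i))"

definition mdeg :: "('d::finite \<Rightarrow> nat) \<Rightarrow> nat" where
  "mdeg \<alpha> = (\<Sum>i\<in>UNIV. \<alpha> i)"

definition peval :: "(('d::finite \<Rightarrow> nat) \<Rightarrow> complex) \<Rightarrow> complex^'d \<Rightarrow> complex" where
  "peval c z = (\<Sum>\<alpha>\<in>{\<alpha>. c \<alpha> \<noteq> 0}. c \<alpha> * monom_eval \<alpha> z)"

definition total_degree :: "(('d::finite \<Rightarrow> nat) \<Rightarrow> complex) \<Rightarrow> nat" where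
  "total_degree c = Max (mdeg ` {\<alpha>. c \<alpha> \<noteq> 0})"

definition hom_part :: "(('d::finite \<Rightarrow> nat) \<Rightarrow> complex) \<Rightarrow> nat \<Rightarrow> (('d \<Rightarrow> nat) \<Rightarrow> complex)" where
  "hom_part c j = (\<lambda>\<alpha>. if mdeg \<alpha> = j then c \<alpha> else 0)"

end

theory Submission
  imports Defs "HOL-Complex_Analysis.Great_Picard"
begin

text \<open>Put \<open>b(\<zeta>) = p(u - \<zeta>)\<close>. Then \<open>b\<close> has no zeros in the polydisc \<open>u - \<D>\<^sup>d\<close>, which is open,
convex and mapped into itself by \<open>\<zeta> \<mapsto> t\<zeta>\<close> for \<open>0 < t \<le> 1\<close>, and \<open>b(t\<zeta>) / t\<^sup>M \<rightarrow> P\<^sub>M(\<zeta>)\<close>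
locally uniformly as \<open>t \<rightarrow> 0\<^sup>+\<close>. A zero of \<open>P\<^sub>M\<close> in the right half-plane can be scaled into
that polydisc. On the complex line through it and a point where \<open>P\<^sub>M \<noteq> 0\<close>, Hurwitz's theorem
applied to the zero-free functions \<open>b(t\<zeta>) / t\<^sup>M\<close> then forces \<open>P\<^sub>M\<close> to vanish identically,
contradicting \<open>P\<^sub>M \<noteq> 0\<close> by the identity theorem for polynomials.\<close>

lemma peval_eq_sum_superset:
  assumes "finite A" "{\<alpha>. c \<alpha> \<noteq> 0} \<subseteq> A"
  shows "peval c z = (\<Sum>\<alpha>\<in>A. c \<alpha> * monom_eval \<alpha> z)"
  unfolding peval_def by (rule sum.mono_neutral_left[OF assms]) auto

lemma monom_eval_split_var:
  "monom_eval \<alpha> z = (z$x) ^ \<alpha> x * monom_eval (\<alpha>(x := 0)) z"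
  unfolding monom_eval_def
  by (simp add: prod.remove[of UNIV x] prod.remove[of UNIV x "\<lambda>i. z$i ^ (\<alpha>(x:=0)) i"])

lemma monom_eval_cong:
  assumes "\<And>i. \<alpha> i \<noteq> 0 \<Longrightarrow> z$i = z'$i"
  shows "monom_eval \<alpha> z = monom_eval \<alpha> z'"
  unfolding monom_eval_def
proof (rule prod.cong[OF refl])
  show "(z$i) ^ \<alpha> i = (z'$i) ^ \<alpha> i" for i
    by (cases "\<alpha> i = 0") (simp_all add: assms)
qed

definition var_coeff :: "(('d::finite \<Rightarrow> nat) \<Rightarrow> complex) \<Rightarrow> 'd \<Rightarrow> nat \<Rightarrow> ('d \<Rightarrow> nat) \<Rightarrow> complex" where
  "var_coeff c x k = (\<lambda>\<beta>. if \<beta> x = 0 then c (\<beta>(x := k)) else 0)"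

lemma var_coeff_support:
  "{\<beta>. var_coeff c x k \<beta> \<noteq> 0} = (\<lambda>\<alpha>. \<alpha>(x := 0)) ` {\<alpha>. c \<alpha> \<noteq> 0 \<and> \<alpha> x = k}"
proof (intro set_eqI iffI)
  fix \<beta> assume "\<beta> \<in> {\<beta>. var_coeff c x k \<beta> \<noteq> 0}"
  then have "\<beta> x = 0" "c (\<beta>(x := k)) \<noteq> 0" by (auto simp: var_coeff_def split: if_splits)
  then show "\<beta> \<in> (\<lambda>\<alpha>. \<alpha>(x := 0)) ` {\<alpha>. c \<alpha> \<noteq> 0 \<and> \<alpha> x = k}"
    by (intro image_eqI[of _ _ "\<beta>(x := k)"]) auto
qed (auto simp: var_coeff_def)

lemma is_mpoly_var_coeff: "is_mpoly c \<Longrightarrow> is_mpoly (var_coeff c x k)"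
  unfolding is_mpoly_def var_coeff_support by simp

lemma peval_var_coeff:
  "peval (var_coeff c x k) z = (\<Sum>\<alpha> | c \<alpha> \<noteq> 0 \<and> \<alpha> x = k. c \<alpha> * monom_eval (\<alpha>(x := 0)) z)"
proof -
  have "inj_on (\<lambda>\<alpha>. \<alpha>(x := 0)) {\<alpha>. c \<alpha> \<noteq> 0 \<and> \<alpha> x = k}"
    by (rule inj_onI) (metis (mono_tags) fun_upd_triv fun_upd_upd mem_Collect_eq)
  then show ?thesis
    unfolding peval_def var_coeff_support
    by (auto simp: sum.reindex var_coeff_def fun_upd_idem intro!: sum.cong)
qed

lemma peval_var_expansion:
  assumes "is_mpoly c" "\<And>\<alpha>. c \<alpha> \<noteq> 0 \<Longrightarrow> \<alpha> x \<le> N"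
  shows "peval c z = (\<Sum>k\<le>N. peval (var_coeff c x k) z * (z$x) ^ k)"
proof -
  have "peval c z = (\<Sum>k\<le>N. \<Sum>\<alpha> | c \<alpha> \<noteq> 0 \<and> \<alpha> x = k. c \<alpha> * monom_eval \<alpha> z)"
    unfolding peval_def
    using sum.group[of "{\<alpha>. c \<alpha> \<noteq> 0}" "{..N}" "\<lambda>\<alpha>. \<alpha> x" "\<lambda>\<alpha>. c \<alpha> * monom_eval \<alpha> z"] assms
    by (simp add: is_mpoly_def image_subset_iff)
  also have "\<dots> = (\<Sum>k\<le>N. peval (var_coeff c x k) z * (z$x) ^ k)"
    unfolding peval_var_coeff sum_distrib_right
  proof (intro sum.cong refl)
    fix k \<alpha> assume "\<alpha> \<in> {\<alpha>. c \<alpha> \<noteq> 0 \<and> \<alpha> x = k}"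
    then show "c \<alpha> * monom_eval \<alpha> z = c \<alpha> * monom_eval (\<alpha>(x := 0)) z * z$x ^ k"
      using monom_eval_split_var[of \<alpha> z x] by simp
  qed
  finally show ?thesis .
qed

lemma peval_var_coeff_cong:
  assumes "\<And>i. i \<noteq> x \<Longrightarrow> z$i = z'$i"
  shows "peval (var_coeff c x k) z = peval (var_coeff c x k) z'"
  unfolding peval_def
proof (intro sum.cong refl arg_cong2[where f = "(*)"] monom_eval_cong)
  fix \<beta> i assume "\<beta> \<in> {\<beta>. var_coeff c x k \<beta> \<noteq> 0}" "\<beta> i \<noteq> 0"
  then have "i \<noteq> x" by (auto simp: var_coeff_def split: if_splits)
  then show "z$i = z'$i" by (rule assms)
qed

lemma peval_var_coeff_eq_0:
  assumes "is_mpoly c" "\<And>z. peval c z = 0"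
  shows "peval (var_coeff c x k) z = 0"
proof -
  define N where "N = k + (\<Sum>\<alpha> | c \<alpha> \<noteq> 0. \<alpha> x)"
  have N: "\<alpha> x \<le> N" if "c \<alpha> \<noteq> 0" for \<alpha>
    using that assms(1) unfolding N_def is_mpoly_def by (intro trans_le_add2 member_le_sum) auto
  have "(\<Sum>j\<le>N. peval (var_coeff c x j) z * y ^ j) = 0" for y
  proof -
    define z' where "z' = (\<chi> i. if i = x then y else z$i)"
    have "peval (var_coeff c x j) z' = peval (var_coeff c x j) z" for j
      by (rule peval_var_coeff_cong) (simp add: z'_def)
    then show ?thesis
      using peval_var_expansion[of c x N z'] assms N by (simp add: z'_def)
  qed
  then show ?thesis
    using polyfun_eq_0[of "\<lambda>j. peval (var_coeff c x j) z" N] by (simp add: N_def)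
qed

lemma mpoly_eq_0_if_peval_eq_0_vars:
  assumes "finite V" "is_mpoly c" "\<And>\<alpha> i. c \<alpha> \<noteq> 0 \<Longrightarrow> i \<notin> V \<Longrightarrow> \<alpha> i = 0"
    and "\<And>z. peval c z = 0"
  shows "c \<alpha> = 0"
  using assms
proof (induction V arbitrary: c \<alpha> rule: finite_induct)
  case empty
  then have "{\<alpha>. c \<alpha> \<noteq> 0} \<subseteq> {\<lambda>_. 0}" by auto
  then have "peval c 0 = c (\<lambda>_. 0)"
    by (subst peval_eq_sum_superset) (auto simp: monom_eval_def)
  then show ?case using empty.prems(3) \<open>{\<alpha>. c \<alpha> \<noteq> 0} \<subseteq> _\<close> by auto
next
  case (insert x V)
  have "var_coeff c x (\<alpha> x) (\<alpha>(x := 0)) = 0"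
  proof (rule insert.IH)
    fix \<beta> i assume "var_coeff c x (\<alpha> x) \<beta> \<noteq> 0" and "i \<notin> V"
    then have "\<beta> x = 0" "c (\<beta>(x := \<alpha> x)) \<noteq> 0" by (auto simp: var_coeff_def split: if_splits)
    show "\<beta> i = 0"
    proof (cases "i = x")
      case False
      then have "(\<beta>(x := \<alpha> x)) i = 0"
        using insert.prems(2) \<open>i \<notin> V\<close> \<open>c (\<beta>(x := \<alpha> x)) \<noteq> 0\<close> by blast
      with False show ?thesis by simp
    qed (simp add: \<open>\<beta> x = 0\<close>)
  qed (use insert.prems in \<open>auto intro: is_mpoly_var_coeff peval_var_coeff_eq_0\<close>)
  then show ?case by (simp add: var_coeff_def)
qed

lemma mpoly_eq_0_if_peval_eq_0:
  assumes "is_mpoly c" "\<And>z. peval c z = 0"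
  shows "c = (\<lambda>_. 0)"
  using mpoly_eq_0_if_peval_eq_0_vars[of UNIV c] assms by auto

lemma monom_eval_scale: "monom_eval \<alpha> (a *s z) = a ^ mdeg \<alpha> * monom_eval \<alpha> z"
  unfolding monom_eval_def mdeg_def
  by (simp add: power_mult_distrib prod.distrib power_sum)

lemma peval_hom_part_scale:
  "peval (hom_part c M) (a *s z) = a ^ M * peval (hom_part c M) z"
  unfolding peval_def monom_eval_scale sum_distrib_left
  by (intro sum.cong refl) (auto simp: hom_part_def split: if_splits)

lemma is_mpoly_hom_part: "is_mpoly c \<Longrightarrow> is_mpoly (hom_part c M)"
  unfolding is_mpoly_def hom_part_def by (rule finite_subset[rotated]) auto

lemma holomorphic_on_peval_compose:
  assumes "\<And>i. (\<lambda>l. f l $ i) holomorphic_on A"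
  shows "(\<lambda>l. peval c (f l)) holomorphic_on A"
  unfolding peval_def monom_eval_def by (intro holomorphic_intros assms)

lemma continuous_on_monom_eval: "continuous_on A (monom_eval \<alpha>)"
  unfolding monom_eval_def by (intro continuous_intros)

lemma peval_scaled_minus_hom_part_bound:
  assumes "is_mpoly b" "\<And>\<alpha>. b \<alpha> \<noteq> 0 \<Longrightarrow> M \<le> mdeg \<alpha>" "0 < t" "t \<le> 1"
  shows "norm (peval b (of_real t *s z) / of_real t ^ M - peval (hom_part b M) z)
    \<le> t * (\<Sum>\<alpha> | b \<alpha> \<noteq> 0. norm (b \<alpha>) * norm (monom_eval \<alpha> z))"
proof -
  define F where "F = {\<alpha>. b \<alpha> \<noteq> 0}"
  have "finite F" using assms(1) by (simp add: F_def is_mpoly_def)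
  have term_bound: "norm ((b \<alpha> * of_real t ^ (mdeg \<alpha> - M) - hom_part b M \<alpha>) * monom_eval \<alpha> z)
      \<le> t * (norm (b \<alpha>) * norm (monom_eval \<alpha> z))" if "\<alpha> \<in> F" for \<alpha>
  proof (cases "mdeg \<alpha> = M")
    case False
    then have "1 \<le> mdeg \<alpha> - M" using assms(2) that by (fastforce simp: F_def)
    then have "t ^ (mdeg \<alpha> - M) \<le> t"
      using power_decreasing[of 1 "mdeg \<alpha> - M" t] assms(3,4) by simp
    then have "norm (b \<alpha>) * norm (monom_eval \<alpha> z) * t ^ (mdeg \<alpha> - M)
        \<le> norm (b \<alpha>) * norm (monom_eval \<alpha> z) * t"
      by (intro mult_left_mono) auto
    then show ?thesis using False assms(3) by (simp add: hom_part_def norm_mult norm_power mult_ac)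
  qed (simp add: hom_part_def assms(3) less_imp_le)
  have "peval b (of_real t *s z) / of_real t ^ M - peval (hom_part b M) z
      = (\<Sum>\<alpha>\<in>F. (b \<alpha> * of_real t ^ (mdeg \<alpha> - M) - hom_part b M \<alpha>) * monom_eval \<alpha> z)"
  proof -
    have "peval b (of_real t *s z) / of_real t ^ M = (\<Sum>\<alpha>\<in>F. b \<alpha> * of_real t ^ (mdeg \<alpha> - M) * monom_eval \<alpha> z)"
      unfolding peval_def monom_eval_scale sum_divide_distrib F_def
      using assms(2,3) by (intro sum.cong refl) (simp add: power_diff)
    moreover have "peval (hom_part b M) z = (\<Sum>\<alpha>\<in>F. hom_part b M \<alpha> * monom_eval \<alpha> z)"
      using \<open>finite F\<close> by (intro peval_eq_sum_superset) (auto simp: F_def hom_part_def)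
    ultimately show ?thesis by (simp add: sum_subtractf algebra_simps)
  qed
  also have "norm \<dots> \<le> (\<Sum>\<alpha>\<in>F. t * (norm (b \<alpha>) * norm (monom_eval \<alpha> z)))"
    by (intro norm_sum[THEN order_trans] sum_mono term_bound)
  finally show ?thesis by (simp add: F_def sum_distrib_left)
qed

lemma uniform_limit_scaled_hom_part:
  assumes "is_mpoly b" "\<And>\<alpha>. b \<alpha> \<noteq> 0 \<Longrightarrow> M \<le> mdeg \<alpha>" "compact K"
  shows "uniform_limit K (\<lambda>t z. peval b (of_real t *s z) / of_real t ^ M) (peval (hom_part b M)) (at_right 0)"
proof (rule uniform_limitI)
  fix e :: real assume "0 < e"
  define R where "R z = (\<Sum>\<alpha> | b \<alpha> \<noteq> 0. norm (b \<alpha>) * norm (monom_eval \<alpha> z))" for z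
  have "continuous_on K R"
    unfolding R_def by (intro continuous_intros continuous_on_monom_eval)
  then obtain B where "B > 0" and B: "\<And>z. z \<in> K \<Longrightarrow> R z \<le> B"
    using compact_continuous_image[OF _ assms(3)] compact_imp_bounded bounded_pos
    by (metis (no_types, lifting) image_eqI real_norm_def abs_le_D1)
  have "\<forall>\<^sub>F t in at_right 0. 0 < t \<and> t < min 1 (e / B)"
    using \<open>0 < e\<close> \<open>B > 0\<close>
    by (auto simp: eventually_at_right_field intro!: exI[of _ "min 1 (e / B)"])
  then show "\<forall>\<^sub>F t in at_right 0. \<forall>z\<in>K. dist (peval b (of_real t *s z) / of_real t ^ M) (peval (hom_part b M) z) < e"
  proof eventually_elim
    case (elim t)
    show ?case
    proof
      fix z assume "z \<in> K"
      have "dist (peval b (of_real t *s z) / of_real t ^ M) (peval (hom_part b M) z) \<le> t * R z"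
        unfolding dist_norm R_def using elim assms(1,2) by (intro peval_scaled_minus_hom_part_bound) auto
      also have "\<dots> \<le> t * B" using B[OF \<open>z \<in> K\<close>] elim by (simp add: mult_left_mono)
      also have "\<dots> < e" using elim \<open>B > 0\<close> by (simp add: pos_less_divide_eq mult.commute)
      finally show "dist (peval b (of_real t *s z) / of_real t ^ M) (peval (hom_part b M) z) < e" .
    qed
  qed
qed

lemma convex_line_vimage:
  fixes z v :: "complex^'d"
  assumes "convex \<Omega>"
  shows "convex {l::complex. z + l *s v \<in> \<Omega>}"
proof (rule convexI)
  fix x y :: complex and u w :: real
  assume "x \<in> {l. z + l *s v \<in> \<Omega>}" "y \<in> {l. z + l *s v \<in> \<Omega>}" "0 \<le> u" "0 \<le> w" "u + w = 1"
  moreover have "z + (u *\<^sub>R x + w *\<^sub>R y) *s v = u *\<^sub>R (z + x *s v) + w *\<^sub>R (z + y *s v)"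
  proof -
    have "complex_of_real u = 1 - of_real w" using \<open>u + w = 1\<close> by (simp add: eq_diff_eq flip: of_real_add)
    then show ?thesis
      unfolding vec_eq_iff vector_add_component vector_scaleR_component vector_smult_component
      by (simp add: scaleR_conv_of_real algebra_simps) (simp flip: distrib_right)
  qed
  ultimately show "u *\<^sub>R x + w *\<^sub>R y \<in> {l. z + l *s v \<in> \<Omega>}"
    using convexD[OF assms] by simp
qed

lemma continuous_on_line:
  fixes z v :: "complex^'d"
  shows "continuous_on A (\<lambda>l::complex. z + l *s v)"
proof -
  have "(\<lambda>l. z + l *s v) = (\<lambda>l. \<chi> i. z$i + l * v$i)" by (rule ext) (simp add: vec_eq_iff)
  then show ?thesis by (simp only:) (intro continuous_intros)
qed

lemma open_line_vimage:
  fixes z v :: "complex^'d"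
  assumes "open \<Omega>"
  shows "open {l::complex. z + l *s v \<in> \<Omega>}"
  using open_vimage[OF assms continuous_on_line] by (simp add: vimage_def)

lemma peval_lowest_hom_part_eq_0:
  fixes b :: "('d::finite \<Rightarrow> nat) \<Rightarrow> complex" and \<Omega> :: "(complex^'d) set"
  assumes b: "is_mpoly b" "\<And>\<alpha>. b \<alpha> \<noteq> 0 \<Longrightarrow> M \<le> mdeg \<alpha>"
    and \<Omega>: "open \<Omega>" "convex \<Omega>" "\<And>z t. z \<in> \<Omega> \<Longrightarrow> 0 < t \<Longrightarrow> t \<le> 1 \<Longrightarrow> of_real t *s z \<in> \<Omega>"
    and zero_free: "\<And>z. z \<in> \<Omega> \<Longrightarrow> peval b z \<noteq> 0"
    and "z0 \<in> \<Omega>" "peval (hom_part b M) z0 = 0"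
  shows "peval (hom_part b M) w = 0"
proof (rule ccontr)
  assume w: "peval (hom_part b M) w \<noteq> 0"
  define q where "q l = z0 + l *s (w - z0)" for l
  define S where "S = {l. q l \<in> \<Omega>}"
  define g where "g l = peval (hom_part b M) (q l)" for l
  define t :: "nat \<Rightarrow> real" where "t n = 1 / real (Suc n)" for n
  define F where "F n l = peval b (of_real (t n) *s q l) / of_real (t n) ^ M" for n l
  have t: "0 < t n" "t n \<le> 1" for n by (auto simp: t_def)
  have "open S" "convex S"
    unfolding S_def q_def by (intro open_line_vimage convex_line_vimage \<Omega>)+
  have "0 \<in> S" using \<open>z0 \<in> \<Omega>\<close> by (simp add: S_def q_def)
  have hol_g: "g holomorphic_on A" for A
    unfolding g_def q_def by (intro holomorphic_on_peval_compose) (simp add: holomorphic_intros)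
  have hol_F: "F n holomorphic_on S" for n
    unfolding F_def q_def using t[of n]
    by (intro holomorphic_intros holomorphic_on_peval_compose) (auto intro!: holomorphic_intros)
  have F_nz: "F n l \<noteq> 0" if "l \<in> S" for n l
    using zero_free \<Omega>(3) that t[of n] by (simp add: F_def S_def)
  have F_lim: "uniform_limit K F g sequentially" if "compact K" "K \<subseteq> S" for K
  proof -
    have "compact (q ` K)"
      unfolding q_def using \<open>compact K\<close> by (intro compact_continuous_image continuous_on_line)
    moreover have "filterlim t (at_right 0) sequentially"
      unfolding t_def by (intro tendsto_imp_filterlim_at_right LIMSEQ_inverse_real_of_nat[unfolded inverse_eq_divide]) auto
    ultimately have "uniform_limit (q ` K) (\<lambda>n z. peval b (of_real (t n) *s z) / of_real (t n) ^ M)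
        (peval (hom_part b M)) sequentially"
      using b by (intro filterlim_compose[OF uniform_limit_scaled_hom_part])
    from uniform_limit_compose'[OF this, of q K] show ?thesis
      unfolding F_def[abs_def] g_def[abs_def] by simp
  qed
  have "q 0 = z0" "q 1 = w" by (simp_all add: q_def vec_eq_iff)
  have "\<not> g constant_on S"
  proof
    assume "g constant_on S"
    then obtain k where k: "\<And>l. l \<in> S \<Longrightarrow> g l = k" by (auto simp: constant_on_def)
    have g_S: "g l = 0" if "l \<in> S" for l
      using k[OF that] k[OF \<open>0 \<in> S\<close>] \<open>q 0 = z0\<close> \<open>peval (hom_part b M) z0 = 0\<close> by (simp add: g_def)
    have "0 islimpt S"
      using \<open>open S\<close> \<open>0 \<in> S\<close> by (intro interior_limit_point) (simp add: interior_open)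
    \<comment> \<open>\<open>1\<close> need not lie in \<open>S\<close>, so the vanishing on \<open>S\<close> is propagated to all of \<open>\<complex>\<close>.\<close>
    then have "g 1 = 0"
      by (rule analytic_continuation[OF hol_g open_UNIV connected_UNIV subset_UNIV UNIV_I _ g_S UNIV_I])
    with w \<open>q 1 = w\<close> show False by (simp add: g_def)
  qed
  from Hurwitz_no_zeros[OF \<open>open S\<close> convex_connected[OF \<open>convex S\<close>] hol_F hol_g F_lim this F_nz \<open>0 \<in> S\<close>]
  show False using \<open>q 0 = z0\<close> \<open>peval (hom_part b M) z0 = 0\<close> by (simp add: g_def)
qed

text \<open>The polydisc \<open>u - \<D>\<^sup>d\<close>, i.e. the image of \<open>\<D>\<^sup>d\<close> under \<open>\<zeta> \<mapsto> u - \<zeta>\<close>.\<close>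

definition polydisc_at_one :: "(complex^'d::finite) set" where
  "polydisc_at_one = {w. \<forall>i. w$i \<in> ball 1 1}"

lemma polydisc_at_one_eq_INT: "polydisc_at_one = (\<Inter>i. (\<lambda>w. w$i) -` ball 1 1)"
  by (auto simp: polydisc_at_one_def)

lemma open_polydisc_at_one: "open polydisc_at_one"
  unfolding polydisc_at_one_eq_INT by (intro open_INT ballI open_vimage_vec_nth open_ball) auto

lemma convex_polydisc_at_one: "convex polydisc_at_one"
  unfolding polydisc_at_one_eq_INT
  by (intro convex_INT convex_linear_vimage bounded_linear.linear[OF bounded_linear_vec_nth] convex_ball)

lemma shrink_mem_ball_one:
  fixes w :: complex
  assumes "w \<in> ball 1 1" "0 < t" "t \<le> 1"
  shows "of_real t * w \<in> ball 1 1"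
proof -
  have "1 - of_real t * w = of_real (1 - t) + of_real t * (1 - w)" by (simp add: algebra_simps)
  then have "norm (1 - of_real t * w) \<le> norm (of_real (1 - t) :: complex) + norm (of_real t * (1 - w))"
    by (simp only: norm_triangle_ineq)
  also have "\<dots> = (1 - t) + t * norm (1 - w)"
    using assms(2,3) by (simp only: norm_of_real norm_mult)
  also have "\<dots> < 1" using assms by (simp add: dist_norm)
  finally show ?thesis by (simp add: dist_norm)
qed

lemma shrink_mem_polydisc_at_one:
  "w \<in> polydisc_at_one \<Longrightarrow> 0 < t \<Longrightarrow> t \<le> 1 \<Longrightarrow> of_real t *s w \<in> polydisc_at_one"
  unfolding polydisc_at_one_def by (simp del: mem_ball add: shrink_mem_ball_one)

lemma small_multiple_mem_ball_one:
  fixes z :: complex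
  assumes "0 < s" "s * (norm z)\<^sup>2 < 2 * Re z"
  shows "of_real s * z \<in> ball 1 1"
proof -
  have "(norm (1 - of_real s * z))\<^sup>2 = 1 - s * (2 * Re z - s * (norm z)\<^sup>2)"
    unfolding cmod_power2 by (simp add: power2_eq_square algebra_simps)
  also have "\<dots> < 1" using assms by simp
  finally show ?thesis by (simp add: dist_norm power_less_one_iff)
qed

lemma right_half_plane_multiple_mem_polydisc_at_one:
  fixes \<zeta> :: "complex^'d::finite"
  assumes "\<And>i. 0 < Re (\<zeta>$i)"
  obtains s where "0 < s" "of_real s *s \<zeta> \<in> polydisc_at_one"
proof
  define s where "s = Min (range (\<lambda>i. Re (\<zeta>$i) / (norm (\<zeta>$i))\<^sup>2))"
  have "\<zeta>$i \<noteq> 0" for i using assms[of i] by auto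
  then show "0 < s" unfolding s_def using assms by (subst Min_gr_iff) auto
  show "of_real s *s \<zeta> \<in> polydisc_at_one"
    unfolding polydisc_at_one_def
  proof (intro CollectI allI)
    fix i
    have "s \<le> Re (\<zeta>$i) / (norm (\<zeta>$i))\<^sup>2" unfolding s_def by (rule Min_le) auto
    then have "s * (norm (\<zeta>$i))\<^sup>2 < 2 * Re (\<zeta>$i)"
      using \<open>\<zeta>$i \<noteq> 0\<close> assms[of i] by (simp add: pos_le_divide_eq)
    then show "(of_real s *s \<zeta>)$i \<in> ball 1 1"
      using small_multiple_mem_ball_one \<open>0 < s\<close> by simp
  qed
qed

theorem theorem14p1:
  fixes c b :: "('d::finite \<Rightarrow> nat) \<Rightarrow> complex" and n M :: nat
  assumes "is_mpoly c"
    and "total_degree c = n"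
    and "\<forall>z::complex^'d. (\<forall>i. norm (z$i) < 1) \<longrightarrow> peval c z \<noteq> 0"
    and "is_mpoly b"
    and "\<forall>\<zeta>. peval b \<zeta> = peval c ((\<chi> i. 1) - \<zeta>)"
    and "\<forall>\<alpha>. b \<alpha> \<noteq> 0 \<longrightarrow> M \<le> mdeg \<alpha>"
    and "hom_part b M \<noteq> (\<lambda>_. 0)"
  shows "\<forall>\<zeta>::complex^'d. (\<forall>i. Re (\<zeta>$i) > 0) \<longrightarrow> peval (hom_part b M) \<zeta> \<noteq> 0"
proof (intro allI impI notI)
  fix \<zeta> :: "complex^'d"
  assume "\<forall>i. Re (\<zeta>$i) > 0" and "peval (hom_part b M) \<zeta> = 0"
  then obtain s where s: "of_real s *s \<zeta> \<in> polydisc_at_one"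
    using right_half_plane_multiple_mem_polydisc_at_one by blast
  have zero_at: "peval (hom_part b M) (of_real s *s \<zeta>) = 0"
    using \<open>peval (hom_part b M) \<zeta> = 0\<close> by (simp add: peval_hom_part_scale)
  have zero_free: "peval b z \<noteq> 0" if "z \<in> polydisc_at_one" for z
  proof -
    have "\<forall>i. norm (((\<chi> i. 1) - z)$i) < 1"
      using that by (simp add: polydisc_at_one_def dist_norm)
    with assms(3,5) show ?thesis by simp
  qed
  have "\<And>\<alpha>. b \<alpha> \<noteq> 0 \<Longrightarrow> M \<le> mdeg \<alpha>" using assms(6) by simp
  from peval_lowest_hom_part_eq_0[OF assms(4) this open_polydisc_at_one
      convex_polydisc_at_one shrink_mem_polydisc_at_one zero_free s zero_at]
  have "hom_part b M = (\<lambda>_. 0)"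
    by (rule mpoly_eq_0_if_peval_eq_0[OF is_mpoly_hom_part[OF assms(4)]])
  with assms(7) show False ..
qed

end
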